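(* Let $\mathbf A$ be a nontrivial finite subdirectly irreducible cBCK-algebra. For every $\mathbf C\in\mathrm{Cov}(A)$, the variety $\mathcal V(\mathbf A)\vee\mathcal V(\mathbf C)$ is a cover of $\mathcal V(\mathbf A)$ in the lattice of varieties of cBCK-algebras.
   Context: A BCK-algebra is an algebra $(A,\ominus,0)$ of type $(2,0)$ satisfying $((x\ominus y)\ominus(x\ominus z))\ominus(z\ominus y)=0$, $x\ominus 0=x$, $0\ominus x=0$, and ($x\ominus y=0$ and $y\ominus x=0$ imply $x=y$); it is ordered by $x\le y$ iff $x\ominus y=0$. A cBCK-algebra is a BCK-algebra satisfying $x\ominus(x\ominus y)=y\ominus(y\ominus x)$; cBCK-algebras form a variety, and the order is a meet-semilattice with $x\wedge y=x\ominus(x\ominus y)$. Finite nontrivial subdirectly irreducible cBCK-algebras are exactly (up to isomorphism) the finite rooted trees (root $0$) with a single atom, where the tree determines the operation: $x\ominus y$ is the element of $[0,x]$ of height $\mathrm{h}(x)-\mathrm{h}(x\wedge y)$, with $\mathrm{h}(z)=|[0,z]|-1$. $\mathcal V(\mathbf X)$ is the variety generated by $\mathbf X$; a cover of a variety $\mathcal V$ is a variety $\mathcal K\supsetneq\mathcal V$ with no variety strictly between them. Construction of $\mathrm{Cov}(A)$: for a subalgebra $\mathbf B$ of $\mathbf A$ and $a\in B$, $a\ne 0$, let $\mathbf B_a$ be the cBCK-algebra with universe $B\cup\{c\}$, $c\notin B$ a new maximal element covering $a$ (so $\mathbf B$ is a subalgebra of $\mathbf B_a$). Let $\mathcal S(\mathbf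 B_a)(c)$ be the set of subalgebras of $\mathbf B_a$ containing $c$. Whenever some member of $\mathcal S(\mathbf B_a)(c)$ is not isomorphic to a subalgebra of $\mathbf A$, let $\mathbf C_a$ be the smallest (under inclusion) member of $\mathcal S(\mathbf B_a)(c)$ not isomorphic to a subalgebra of $\mathbf A$ (it exists). $C_B$ is the collection of all such $\mathbf C_a$, $a\in B$, and $\mathrm{Cov}(A)=\bigcup_{\mathbf B}C_B$ over all subalgebras $\mathbf B$ of $\mathbf A$. *)

theory Defs
  imports Main
begin

record 'a alg =
  car :: "'a set"
  opr :: "'a \<Rightarrow> 'a \<Rightarrow> 'a"
  zer :: "'a"

definition is_cBCK :: "'a alg \<Rightarrow> bool" where
  "is_cBCK X \<longleftrightarrow>
     zer X \<in> car X \<and>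
     (\<forall>x\<in>car X. \<forall>y\<in>car X. opr X x y \<in> car X) \<and>
     (\<forall>x\<in>car X. \<forall>y\<in>car X. \<forall>z\<in>car X.
        opr X (opr X (opr X x y) (opr X x z)) (opr X z y) = zer X) \<and>
     (\<forall>x\<in>car X. opr X x (zer X) = x) \<and>
     (\<forall>x\<in>car X. opr X (zer X) x = zer X) \<and>
     (\<forall>x\<in>car X. \<forall>y\<in>car X. opr X x y = zer X \<and> opr X y x = zer X \<longrightarrow> x = y) \<and>
     (\<forall>x\<in>car X. \<forall>y\<in>car X. opr X x (opr X x y) = opr X y (opr X y x))"

definition is_subuniverse :: "'a alg \<Rightarrow> 'a set \<Rightarrow> bool" where
  "is_subuniverse X S \<longleftrightarrow> S \<subseteq> car X \<and> zer X \<in> S \<and>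
     (\<forall>x\<in>S. \<forall>y\<in>S. opr X x y \<in> S)"

definition subalg :: "'a alg \<Rightarrow> 'a set \<Rightarrow> 'a alg" where
  "subalg X S = \<lparr>car = S, opr = opr X, zer = zer X\<rparr>"

definition iso :: "'a alg \<Rightarrow> 'b alg \<Rightarrow> bool" where
  "iso X Y \<longleftrightarrow> (\<exists>f. bij_betw f (car X) (car Y) \<and> f (zer X) = zer Y \<and>
     (\<forall>x\<in>car X. \<forall>y\<in>car X. f (opr X x y) = opr Y (f x) (f y)))"

definition iso_to_sub :: "'a alg \<Rightarrow> 'b alg \<Rightarrow> bool" where
  "iso_to_sub X A \<longleftrightarrow> (\<exists>S. is_subuniverse A S \<and> iso X (subalg A S))"

definition is_cong :: "'a alg \<Rightarrow> ('a \<times> 'a) set \<Rightarrow> bool" where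
  "is_cong X \<theta> \<longleftrightarrow> equiv (car X) \<theta> \<and>
     (\<forall>x x' y y'. (x, x') \<in> \<theta> \<and> (y, y') \<in> \<theta> \<longrightarrow> (opr X x y, opr X x' y') \<in> \<theta>)"

text \<open>Subdirectly irreducible: there is a least congruence above the identity
  (a monolith), i.e. a pair of distinct elements collapsed by every nontrivial congruence.\<close>
definition subdirectly_irreducible :: "'a alg \<Rightarrow> bool" where
  "subdirectly_irreducible X \<longleftrightarrow>
     (\<exists>p\<in>car X. \<exists>q\<in>car X. p \<noteq> q \<and>
        (\<forall>\<theta>. is_cong X \<theta> \<and> \<theta> \<noteq> Id_on (car X) \<longrightarrow> (p, q) \<in> \<theta>))"

datatype trm = Var nat | Zero | Minus trm trm

primrec eval :: "'a alg \<Rightarrow> (nat \<Rightarrow> 'a) \<Rightarrow> trm \<Rightarrow> 'a" where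
  "eval X v (Var n) = v n"
| "eval X v Zero = zer X"
| "eval X v (Minus s t) = opr X (eval X v s) (eval X v t)"

text \<open>The equational theory of an algebra; the variety V(X) is the class of models
  of this set, so V(X) \<subseteq> V(Y) iff Ids Y \<subseteq> Ids X, and the equational theory of
  V(X) \<or> V(Y) is Ids X \<inter> Ids Y.\<close>
definition Ids :: "'a alg \<Rightarrow> (trm \<times> trm) set" where
  "Ids X = {(s, t). \<forall>v. (\<forall>n. v n \<in> car X) \<longrightarrow> eval X v s = eval X v t}"

definition down :: "'a set \<Rightarrow> ('a \<Rightarrow> 'a \<Rightarrow> bool) \<Rightarrow> 'a \<Rightarrow> 'a set" where
  "down S le x = {z \<in> S. le z x}"

definition hgt :: "'a set \<Rightarrow> ('a \<Rightarrow> 'a \<Rightarrow> bool) \<Rightarrow> 'a \<Rightarrow> nat" where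
  "hgt S le x = card (down S le x) - 1"

definition tmeet :: "'a set \<Rightarrow> ('a \<Rightarrow> 'a \<Rightarrow> bool) \<Rightarrow> 'a \<Rightarrow> 'a \<Rightarrow> 'a" where
  "tmeet S le x y = (THE m. m \<in> S \<and> le m x \<and> le m y \<and> (\<forall>w\<in>S. le w x \<and> le w y \<longrightarrow> le w m))"

definition tree_op :: "'a set \<Rightarrow> ('a \<Rightarrow> 'a \<Rightarrow> bool) \<Rightarrow> 'a \<Rightarrow> 'a \<Rightarrow> 'a" where
  "tree_op S le x y = (THE z. z \<in> S \<and> le z x \<and>
      hgt S le z = hgt S le x - hgt S le (tmeet S le x y))"

text \<open>Order on B \<union> {c}, with B embedded via Some and the new element c = None
  a maximal element covering a.\<close>
fun ext_le :: "'a alg \<Rightarrow> 'a \<Rightarrow> 'a option \<Rightarrow> 'a option \<Rightarrow> bool" where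
  "ext_le A a (Some u) (Some v) = (opr A u v = zer A)"
| "ext_le A a (Some u) None = (opr A u a = zer A)"
| "ext_le A a None (Some v) = False"
| "ext_le A a None None = True"

definition ext_alg :: "'a alg \<Rightarrow> 'a set \<Rightarrow> 'a \<Rightarrow> 'a option alg" where
  "ext_alg A B a =
     \<lparr>car = Some ` B \<union> {None},
      opr = tree_op (Some ` B \<union> {None}) (ext_le A a),
      zer = Some (zer A)\<rparr>"

text \<open>C belongs to Cov(A): C = C_a for some subalgebra B of A and nonzero a in B,
  i.e. C is the inclusion-least subuniverse of B_a containing c that is not
  isomorphic to a subalgebra of A.\<close>
definition in_Cov :: "'a alg \<Rightarrow> 'a option alg \<Rightarrow> bool" where
  "in_Cov A C \<longleftrightarrow> (\<exists>B a D.
     is_subuniverse A B \<and> a \<in> B \<and> a \<noteq> zer A \<and>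
     is_subuniverse (ext_alg A B a) D \<and> None \<in> D \<and>
     \<not> iso_to_sub (subalg (ext_alg A B a) D) A \<and>
     (\<forall>D'. is_subuniverse (ext_alg A B a) D' \<and> None \<in> D' \<and>
           \<not> iso_to_sub (subalg (ext_alg A B a) D') A \<longrightarrow> D \<subseteq> D') \<and>
     C = subalg (ext_alg A B a) D)"

end

theory Submission
  imports Defs
begin

text \<open>In a finite subdirectly irreducible cBCK-algebra \<open>A\<close> nonzero elements have a nonzero
  meet (otherwise an annihilator ideal and its own annihilator would be two nonzero ideals
  meeting in \<open>0\<close>), so \<open>A\<close> is a rooted tree. Hence subtracting a fixed nonzero element
  repeatedly drives every element to \<open>0\<close>, both in \<open>A\<close> and in the tree algebras \<open>B\<^sub>a\<close>, so
  every subalgebra \<open>C\<close> of some \<open>B\<^sub>a\<close> is simple. The same iterated subtraction turns a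
  term \<open>d\<close> and finitely many assignments into an identity \<open>d \<ominus> g\<^sub>1 \<ominus> \<dots> \<ominus> g\<^sub>k = 0\<close>,
  which yields assignments respecting all relations of a given tuple of generators. With them,
  \<open>C \<in> V(A)\<close> would make \<open>C\<close> embed into \<open>A\<close>; and if \<open>K\<close> with
  \<open>V(A) \<subseteq> V(K) \<subseteq> V(A) \<or> V(C)\<close> fails an identity of \<open>A\<close>, a separating assignment into
  \<open>C\<close> generates a subalgebra containing the new element \<open>c\<close> that does not embed into \<open>A\<close>,
  hence all of \<open>C\<close> by minimality, so that \<open>C\<close> is a homomorphic image of a subalgebra of \<open>K\<close>.\<close>

lemma funpow_reaches_fixpoint:
  fixes \<mu> :: "'a \<Rightarrow> nat"
  assumes fixpoint: "f c = c"
    and closed: "\<And>x. x \<in> S \<Longrightarrow> f x \<in> S"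
    and descent: "\<And>x. x \<in> S \<Longrightarrow> x \<noteq> c \<Longrightarrow> \<mu> (f x) < \<mu> x"
    and "x \<in> S" and "\<mu> x \<le> n"
  shows "(f ^^ n) x = c"
  using assms(4,5)
proof (induction n arbitrary: x)
  case 0
  then show ?case using descent by fastforce
next
  case (Suc n)
  show ?case
  proof (cases "x = c")
    case True
    have "(f ^^ k) c = c" for k by (induction k) (simp_all add: fixpoint)
    then show ?thesis using True by blast
  next
    case False
    then have "\<mu> (f x) \<le> n" using Suc.prems descent by fastforce
    then have "(f ^^ n) (f x) = c" using Suc closed by blast
    then show ?thesis by (simp add: funpow_Suc_right del: funpow.simps)
  qed
qed


section \<open>Finite trees\<close>

locale finite_tree =
  fixes T :: "'b set" and le :: "'b \<Rightarrow> 'b \<Rightarrow> bool" (infix "\<sqsubseteq>" 50)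
  assumes finite_T: "finite T"
    and refl: "x \<in> T \<Longrightarrow> x \<sqsubseteq> x"
    and antisym: "x \<in> T \<Longrightarrow> y \<in> T \<Longrightarrow> x \<sqsubseteq> y \<Longrightarrow> y \<sqsubseteq> x \<Longrightarrow> x = y"
    and trans: "x \<in> T \<Longrightarrow> y \<in> T \<Longrightarrow> w \<in> T \<Longrightarrow> x \<sqsubseteq> y \<Longrightarrow> y \<sqsubseteq> w \<Longrightarrow> x \<sqsubseteq> w"
    and down_chain: "x \<in> T \<Longrightarrow> y \<in> T \<Longrightarrow> y' \<in> T \<Longrightarrow> y \<sqsubseteq> x \<Longrightarrow> y' \<sqsubseteq> x \<Longrightarrow> y \<sqsubseteq> y' \<or> y' \<sqsubseteq> y"
begin

abbreviation height :: "'b \<Rightarrow> nat" where "height \<equiv> hgt T le"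

lemma finite_down: "finite (down T le x)"
  unfolding down_def using finite_T by auto

lemma card_down: "x \<in> T \<Longrightarrow> card (down T le x) = height x + 1"
proof -
  assume "x \<in> T"
  then have "x \<in> down T le x" unfolding down_def using refl by blast
  then have "card (down T le x) > 0" using finite_down card_gt_0_iff by blast
  then show ?thesis unfolding hgt_def by simp
qed

lemma height_le_card: "height x \<le> card T"
proof -
  have "card (down T le x) \<le> card T" unfolding down_def using finite_T by (intro card_mono) auto
  then show ?thesis unfolding hgt_def by simp
qed

lemma down_mono: "x \<in> T \<Longrightarrow> y \<in> T \<Longrightarrow> y \<sqsubseteq> x \<Longrightarrow> down T le y \<subseteq> down T le x"
  unfolding down_def using trans by blast

lemma height_mono: "x \<in> T \<Longrightarrow> y \<in> T \<Longrightarrow> y \<sqsubseteq> x \<Longrightarrow> height y \<le> height x"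
  using card_mono[OF finite_down down_mono] unfolding hgt_def by (simp add: diff_le_mono)

lemma height_strict_mono:
  assumes "x \<in> T" "y \<in> T" "y \<sqsubseteq> x" "y \<noteq> x"
  shows "height y < height x"
proof -
  have "x \<notin> down T le y" using assms antisym[of x y] unfolding down_def by auto
  moreover have "x \<in> down T le x" using refl[OF assms(1)] assms(1) unfolding down_def by simp
  ultimately have "down T le y \<subset> down T le x" using down_mono[OF assms(1-3)] by blast
  then have "card (down T le y) < card (down T le x)" using psubset_card_mono finite_down by blast
  then show ?thesis using card_down assms by simp
qed

lemma eq_if_le_height_0: "x \<in> T \<Longrightarrow> r \<in> T \<Longrightarrow> r \<sqsubseteq> x \<Longrightarrow> height x = 0 \<Longrightarrow> x = r"
  using height_strict_mono[of x r] by auto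

lemma eq_if_height_eq:
  assumes "x \<in> T" "y \<in> T" "y \<sqsubseteq> x" "y' \<in> T" "y' \<sqsubseteq> x" "height y = height y'"
  shows "y = y'"
proof (rule ccontr)
  assume "y \<noteq> y'"
  then show False
    using down_chain[OF assms(1,2,4,3,5)] height_strict_mono[of y y']
      height_strict_mono[of y' y] assms
    by auto
qed

lemma inj_on_height_down: "x \<in> T \<Longrightarrow> inj_on height (down T le x)"
  unfolding inj_on_def down_def using eq_if_height_eq by blast

lemma height_image_down: "x \<in> T \<Longrightarrow> height ` down T le x = {0..height x}"
proof -
  assume x: "x \<in> T"
  have sub: "height ` down T le x \<subseteq> {0..height x}"
    using height_mono[OF x] unfolding down_def by auto
  have "card (height ` down T le x) = card {0..height x}"
    using card_image[OF inj_on_height_down[OF x]] card_down[OF x] by simp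
  then show ?thesis using card_subset_eq[OF _ sub] by simp
qed

lemma tree_op_spec:
  assumes x: "x \<in> T"
  shows "tree_op T le x y \<in> T \<and> tree_op T le x y \<sqsubseteq> x \<and>
    height (tree_op T le x y) = height x - height (tmeet T le x y)"
proof -
  have "height x - height (tmeet T le x y) \<in> height ` down T le x"
    unfolding height_image_down[OF x] by simp
  then obtain y' where y': "y' \<in> T" "y' \<sqsubseteq> x" "height y' = height x - height (tmeet T le x y)"
    unfolding down_def by auto
  have "tree_op T le x y = y'" unfolding tree_op_def
    by (rule the_equality) (use y' eq_if_height_eq[OF x] in auto)
  then show ?thesis using y' by simp
qed

lemma tree_op_eqI:
  assumes "x \<in> T" "y' \<in> T" "y' \<sqsubseteq> x" "height y' = height x - height (tmeet T le x y)"
  shows "tree_op T le x y = y'"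
  using tree_op_spec[OF assms(1), of y] eq_if_height_eq[OF assms(1)] assms by metis

lemma tmeet_eqI:
  assumes "m \<in> T" "m \<sqsubseteq> x" "m \<sqsubseteq> y" "\<forall>w\<in>T. w \<sqsubseteq> x \<and> w \<sqsubseteq> y \<longrightarrow> w \<sqsubseteq> m"
  shows "tmeet T le x y = m"
  unfolding tmeet_def by (rule the_equality) (use assms antisym in blast)+

end


section \<open>cBCK-algebras\<close>

locale cbck =
  fixes A :: "'a alg"
  assumes cBCK: "is_cBCK A"
begin

abbreviation diff :: "'a \<Rightarrow> 'a \<Rightarrow> 'a" (infixl "\<ominus>" 65) where "x \<ominus> y \<equiv> opr A x y"
abbreviation below :: "'a \<Rightarrow> 'a \<Rightarrow> bool" (infix "\<preceq>" 50) where "x \<preceq> y \<equiv> x \<ominus> y = zer A"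

lemma zero_closed: "zer A \<in> car A"
  and diff_closed: "x \<in> car A \<Longrightarrow> y \<in> car A \<Longrightarrow> x \<ominus> y \<in> car A"
  and bck_axiom: "x \<in> car A \<Longrightarrow> y \<in> car A \<Longrightarrow> w \<in> car A \<Longrightarrow> (x \<ominus> y) \<ominus> (x \<ominus> w) \<preceq> w \<ominus> y"
  and diff_zero: "x \<in> car A \<Longrightarrow> x \<ominus> zer A = x"
  and zero_diff: "x \<in> car A \<Longrightarrow> zer A \<ominus> x = zer A"
  and below_antisym: "x \<in> car A \<Longrightarrow> y \<in> car A \<Longrightarrow> x \<preceq> y \<Longrightarrow> y \<preceq> x \<Longrightarrow> x = y"
  and meet_comm: "x \<in> car A \<Longrightarrow> y \<in> car A \<Longrightarrow> x \<ominus> (x \<ominus> y) = y \<ominus> (y \<ominus> x)"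
  using cBCK unfolding is_cBCK_def by blast+

lemma diff_self: "x \<in> car A \<Longrightarrow> x \<ominus> x = zer A"
  by (metis diff_zero meet_comm diff_closed bck_axiom)

lemma diff_below: "x \<in> car A \<Longrightarrow> y \<in> car A \<Longrightarrow> x \<ominus> y \<preceq> x"
  by (metis bck_axiom diff_zero zero_diff diff_closed zero_closed)

lemma below_trans: "x \<in> car A \<Longrightarrow> y \<in> car A \<Longrightarrow> w \<in> car A \<Longrightarrow> x \<preceq> y \<Longrightarrow> y \<preceq> w \<Longrightarrow> x \<preceq> w"
  by (metis bck_axiom diff_zero diff_closed)

lemma diff_antimono: "x \<in> car A \<Longrightarrow> y \<in> car A \<Longrightarrow> w \<in> car A \<Longrightarrow> y \<preceq> w \<Longrightarrow> x \<ominus> w \<preceq> x \<ominus> y"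
  by (metis bck_axiom diff_zero diff_closed)

lemma diff_mono: "x \<in> car A \<Longrightarrow> y \<in> car A \<Longrightarrow> w \<in> car A \<Longrightarrow> x \<preceq> y \<Longrightarrow> x \<ominus> w \<preceq> y \<ominus> w"
  by (metis bck_axiom diff_zero diff_closed)

lemma below_zero: "x \<in> car A \<Longrightarrow> x \<preceq> zer A \<Longrightarrow> x = zer A"
  using diff_zero by metis

lemma meet_below_left: "x \<in> car A \<Longrightarrow> y \<in> car A \<Longrightarrow> x \<ominus> (x \<ominus> y) \<preceq> x"
  using diff_below diff_closed by blast

lemma meet_below_right: "x \<in> car A \<Longrightarrow> y \<in> car A \<Longrightarrow> x \<ominus> (x \<ominus> y) \<preceq> y"
  using bck_axiom[of x "zer A" y] diff_zero zero_closed by force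

lemma meet_eq_left: "x \<in> car A \<Longrightarrow> w \<in> car A \<Longrightarrow> w \<preceq> x \<Longrightarrow> x \<ominus> (x \<ominus> w) = w"
  using meet_comm diff_zero by metis

lemma diff_meet: "x \<in> car A \<Longrightarrow> y \<in> car A \<Longrightarrow> x \<ominus> (x \<ominus> (x \<ominus> y)) = x \<ominus> y"
  by (metis diff_below diff_zero meet_comm diff_closed)

lemma meet_greatest:
  "x \<in> car A \<Longrightarrow> y \<in> car A \<Longrightarrow> w \<in> car A \<Longrightarrow> w \<preceq> x \<Longrightarrow> w \<preceq> y \<Longrightarrow> w \<preceq> x \<ominus> (x \<ominus> y)"
  by (smt (verit, best) diff_antimono diff_zero meet_comm diff_closed)

lemma diff_exchange:
  assumes "x \<in> car A" "y \<in> car A" "w \<in> car A"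
  shows "(x \<ominus> y) \<ominus> w = (x \<ominus> w) \<ominus> y"
proof -
  have exchange_le: "(x \<ominus> y) \<ominus> w \<preceq> (x \<ominus> w) \<ominus> y"
    if "x \<in> car A" "y \<in> car A" "w \<in> car A" for x y w
  proof -
    have "(x \<ominus> y) \<ominus> w \<preceq> (x \<ominus> y) \<ominus> (x \<ominus> (x \<ominus> w))"
      using diff_antimono[of "x \<ominus> y" "x \<ominus> (x \<ominus> w)" w]
        meet_below_right[of x w] that diff_closed by auto
    moreover have "(x \<ominus> y) \<ominus> (x \<ominus> (x \<ominus> w)) \<preceq> (x \<ominus> w) \<ominus> y"
      using bck_axiom[of x y "x \<ominus> w"] that diff_closed by auto
    ultimately show ?thesis using below_trans that diff_closed by meson
  qed
  show ?thesis using exchange_le assms below_antisym diff_closed by meson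
qed

lemma meet_diffs_zero:
  "u \<in> car A \<Longrightarrow> v \<in> car A \<Longrightarrow> x \<in> car A \<Longrightarrow> u \<preceq> x \<Longrightarrow> v \<preceq> x \<Longrightarrow>
    (u \<ominus> v) \<ominus> ((u \<ominus> v) \<ominus> (v \<ominus> u)) = zer A"
  by (smt (verit, del_insts) diff_below diff_exchange diff_zero meet_comm diff_closed)

definition ideal :: "'a set \<Rightarrow> bool" where
  "ideal J \<longleftrightarrow> J \<subseteq> car A \<and> zer A \<in> J \<and> (\<forall>x\<in>car A. \<forall>y\<in>J. x \<ominus> y \<in> J \<longrightarrow> x \<in> J)"

definition ideal_cong :: "'a set \<Rightarrow> ('a \<times> 'a) set" where
  "ideal_cong J = {(x, y). x \<in> car A \<and> y \<in> car A \<and> x \<ominus> y \<in> J \<and> y \<ominus> x \<in> J}"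

definition annihilator :: "'a set \<Rightarrow> 'a set" where
  "annihilator X = {w \<in> car A. \<forall>j\<in>X. w \<ominus> (w \<ominus> j) = zer A}"

lemma ideal_diff_closed: "ideal J \<Longrightarrow> x \<in> car A \<Longrightarrow> y \<in> J \<Longrightarrow> x \<ominus> y \<in> J \<Longrightarrow> x \<in> J"
  unfolding ideal_def by blast

lemma ideal_down_closed: "ideal J \<Longrightarrow> x \<in> car A \<Longrightarrow> y \<in> J \<Longrightarrow> x \<preceq> y \<Longrightarrow> x \<in> J"
  using ideal_diff_closed[of J x y] unfolding ideal_def by simp

lemma ideal_diff_trans:
  assumes J: "ideal J" and S: "x \<in> car A" "y \<in> car A" "w \<in> car A"
    and "x \<ominus> y \<in> J" "y \<ominus> w \<in> J"
  shows "x \<ominus> w \<in> J"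
proof -
  have "(x \<ominus> w) \<ominus> (x \<ominus> y) \<in> J"
    using ideal_down_closed[OF J _ \<open>y \<ominus> w \<in> J\<close>] bck_axiom[OF S(1,3,2)] S diff_closed by simp
  then show ?thesis using ideal_diff_closed[OF J _ \<open>x \<ominus> y \<in> J\<close>] S diff_closed by simp
qed

lemma ideal_diff_cong_left:
  assumes J: "ideal J" and S: "x \<in> car A" "x' \<in> car A" "y \<in> car A" and "x \<ominus> x' \<in> J"
  shows "(x \<ominus> y) \<ominus> (x' \<ominus> y) \<in> J"
proof -
  have "((x \<ominus> y) \<ominus> (x \<ominus> x')) \<ominus> (x' \<ominus> y) = zer A" using bck_axiom[of x y x'] S by blast
  then have "(x \<ominus> y) \<ominus> (x' \<ominus> y) \<preceq> x \<ominus> x'"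
    using diff_exchange[of "x \<ominus> y" "x \<ominus> x'" "x' \<ominus> y"] S diff_closed by simp
  then show ?thesis using ideal_down_closed[OF J _ \<open>x \<ominus> x' \<in> J\<close>] S diff_closed by simp
qed

lemma ideal_diff_cong_right:
  assumes J: "ideal J" and S: "x \<in> car A" "y \<in> car A" "y' \<in> car A" and "y' \<ominus> y \<in> J"
  shows "(x \<ominus> y) \<ominus> (x \<ominus> y') \<in> J"
  using ideal_down_closed[OF J _ \<open>y' \<ominus> y \<in> J\<close>] bck_axiom[OF S] S diff_closed by simp

lemma is_cong_ideal_cong:
  assumes J: "ideal J"
  shows "is_cong A (ideal_cong J)"
proof -
  have zero_J: "zer A \<in> J" using J unfolding ideal_def by blast
  have eq: "equiv (car A) (ideal_cong J)"
  proof (rule equivI)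
    show "ideal_cong J \<subseteq> car A \<times> car A" unfolding ideal_cong_def by blast
    show "refl_on (car A) (ideal_cong J)"
      unfolding refl_on_def ideal_cong_def using diff_self zero_J by auto
    show "sym (ideal_cong J)" unfolding sym_def ideal_cong_def by blast
    show "trans (ideal_cong J)"
      unfolding trans_def ideal_cong_def using ideal_diff_trans[OF J] by auto
  qed
  have "(x \<ominus> y, x' \<ominus> y') \<in> ideal_cong J"
    if "(x, x') \<in> ideal_cong J" "(y, y') \<in> ideal_cong J" for x x' y y'
  proof -
    have "(x \<ominus> y, x' \<ominus> y) \<in> ideal_cong J"
      using that ideal_diff_cong_left[OF J] diff_closed unfolding ideal_cong_def by auto
    moreover have "(x' \<ominus> y, x' \<ominus> y') \<in> ideal_cong J"
      using that ideal_diff_cong_right[OF J] diff_closed unfolding ideal_cong_def by auto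
    ultimately show ?thesis using eq unfolding equiv_def trans_def by blast
  qed
  then show ?thesis unfolding is_cong_def using eq by blast
qed

lemma ideal_cong_nontrivial:
  assumes "ideal J" "p \<in> J" "p \<noteq> zer A"
  shows "ideal_cong J \<noteq> Id_on (car A)"
proof -
  have "p \<in> car A" "zer A \<in> J" using assms unfolding ideal_def by auto
  then have "(p, zer A) \<in> ideal_cong J"
    using assms zero_closed diff_zero zero_diff unfolding ideal_cong_def by auto
  then show ?thesis using assms(3) by auto
qed

lemma meet_zero_below:
  assumes S: "m \<in> car A" "j \<in> car A" "y \<in> car A" and "m \<preceq> j" and "y \<ominus> (y \<ominus> j) = zer A"
  shows "m \<ominus> (m \<ominus> y) = zer A"
proof -
  have "m \<ominus> (m \<ominus> y) \<preceq> j"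
    using below_trans[OF _ S(1,2) meet_below_left[OF S(1,3)] assms(4)] S diff_closed by blast
  then have "m \<ominus> (m \<ominus> y) \<preceq> y \<ominus> (y \<ominus> j)"
    using meet_greatest[OF S(3,2)] meet_below_right[OF S(1,3)] S diff_closed by blast
  then show ?thesis using below_zero assms(5) S diff_closed by simp
qed

lemma diff_eq_self_if_meet_zero:
  "m \<in> car A \<Longrightarrow> y \<in> car A \<Longrightarrow> m \<ominus> (m \<ominus> y) = zer A \<Longrightarrow> m \<ominus> y = m"
  using diff_meet[of m y] diff_zero[of m] by simp

lemma ideal_annihilator:
  assumes X: "X \<subseteq> car A"
  shows "ideal (annihilator X)"
proof -
  have "x \<in> annihilator X"
    if x: "x \<in> car A" and y: "y \<in> annihilator X" and xy: "x \<ominus> y \<in> annihilator X" for x y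
  proof -
    have yS: "y \<in> car A" using y unfolding annihilator_def by blast
    have "x \<ominus> (x \<ominus> j) = zer A" if j: "j \<in> X" for j
    proof -
      define m where "m = x \<ominus> (x \<ominus> j)"
      have jS: "j \<in> car A" using j X by blast
      have mS: "m \<in> car A" and mx: "m \<preceq> x" and mj: "m \<preceq> j"
        unfolding m_def using diff_closed meet_below_left meet_below_right x jS by auto
      have "y \<ominus> (y \<ominus> j) = zer A" using y j unfolding annihilator_def by blast
      then have "m \<ominus> y = m"
        using diff_eq_self_if_meet_zero[OF mS yS meet_zero_below[OF mS jS yS mj]] by blast
      then have "m \<preceq> x \<ominus> y" using diff_mono[OF mS x yS mx] by simp
      then have "m \<preceq> (x \<ominus> y) \<ominus> ((x \<ominus> y) \<ominus> j)"
        using meet_greatest[OF _ jS mS _ mj] x yS diff_closed by blast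
      moreover have "(x \<ominus> y) \<ominus> ((x \<ominus> y) \<ominus> j) = zer A" using xy j unfolding annihilator_def by blast
      ultimately show ?thesis using below_zero mS unfolding m_def by simp
    qed
    then show ?thesis unfolding annihilator_def using x by blast
  qed
  moreover have "zer A \<in> annihilator X"
    unfolding annihilator_def using zero_closed zero_diff X by auto
  ultimately show ?thesis unfolding ideal_def annihilator_def by blast
qed

end

definition iterated_diff_vanishes :: "'c alg \<Rightarrow> nat \<Rightarrow> bool" where
  "iterated_diff_vanishes X N \<longleftrightarrow>
     (\<forall>g\<in>car X. g \<noteq> zer X \<longrightarrow> (\<forall>x\<in>car X. ((\<lambda>y. opr X y g) ^^ N) x = zer X))"

locale finite_si_cbck = cbck +
  assumes finite_carrier: "finite (car A)"
    and si: "subdirectly_irreducible A"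
begin

lemma nonzero_ideals_intersect:
  assumes J: "ideal J" "p \<in> J" "p \<noteq> zer A" and J': "ideal J'" "q \<in> J'" "q \<noteq> zer A"
  shows "\<exists>x\<in>J \<inter> J'. x \<noteq> zer A"
proof -
  obtain p' q' where "p' \<in> car A" "q' \<in> car A" "p' \<noteq> q'"
    and monolith: "\<And>\<theta>. is_cong A \<theta> \<Longrightarrow> \<theta> \<noteq> Id_on (car A) \<Longrightarrow> (p', q') \<in> \<theta>"
    using si unfolding subdirectly_irreducible_def by blast
  have "(p', q') \<in> ideal_cong J"
    using monolith[OF is_cong_ideal_cong[OF J(1)] ideal_cong_nontrivial[OF J]] .
  moreover have "(p', q') \<in> ideal_cong J'"
    using monolith[OF is_cong_ideal_cong[OF J'(1)] ideal_cong_nontrivial[OF J']] .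
  ultimately have "p' \<ominus> q' \<in> J \<inter> J'" "p' \<ominus> q' \<noteq> zer A \<or> q' \<ominus> p' \<noteq> zer A"
    "q' \<ominus> p' \<in> J \<inter> J'"
    using \<open>p' \<noteq> q'\<close> below_antisym[of p' q'] unfolding ideal_cong_def by auto
  then show ?thesis by blast
qed

lemma meet_nonzero:
  assumes pS: "p \<in> car A" and qS: "q \<in> car A" and "p \<noteq> zer A" "q \<noteq> zer A"
  shows "p \<ominus> (p \<ominus> q) \<noteq> zer A"
proof
  assume pq: "p \<ominus> (p \<ominus> q) = zer A"
  define J where "J = annihilator {q}"
  have JS: "J \<subseteq> car A" unfolding J_def annihilator_def by blast
  have "p \<in> J" unfolding J_def annihilator_def using pS pq by blast
  moreover have "q \<in> annihilator J"
    unfolding annihilator_def J_def using qS meet_comm by auto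
  ultimately obtain x where x: "x \<in> J" "x \<in> annihilator J" "x \<noteq> zer A"
    using nonzero_ideals_intersect[of J p "annihilator J" q] ideal_annihilator JS qS assms
    unfolding J_def by blast
  then have "x \<ominus> (x \<ominus> x) = zer A" unfolding annihilator_def by blast
  moreover have "x \<ominus> (x \<ominus> x) = x" using x(1) JS diff_self diff_zero by auto
  ultimately show False using x(3) by simp
qed

lemma comparable_if_common_upper_bound:
  assumes "u \<in> car A" "v \<in> car A" "x \<in> car A" "u \<preceq> x" "v \<preceq> x"
  shows "u \<preceq> v \<or> v \<preceq> u"
  using meet_nonzero[of "u \<ominus> v" "v \<ominus> u"] meet_diffs_zero[OF assms] assms(1,2) diff_closed by blast

lemma finite_tree_order: "finite_tree (car A) (\<preceq>)"
proof
  fix x y w assume "x \<in> car A" "y \<in> car A" "w \<in> car A" "x \<preceq> y" "y \<preceq> w"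
  then show "x \<preceq> w" by (rule below_trans)
qed (use finite_carrier diff_self below_antisym comparable_if_common_upper_bound in auto)

lemma diff_neq_self:
  assumes "x \<in> car A" "g \<in> car A" "x \<noteq> zer A" "g \<noteq> zer A"
  shows "x \<ominus> g \<noteq> x"
proof
  assume "x \<ominus> g = x"
  then have "x \<ominus> (x \<ominus> g) = zer A" using diff_self assms(1) by simp
  then show False using meet_nonzero assms by blast
qed

lemma iterated_diff_vanishes: "iterated_diff_vanishes A (card (car A))"
  unfolding iterated_diff_vanishes_def
proof (intro ballI impI)
  interpret order: finite_tree "car A" "(\<preceq>)" by (rule finite_tree_order)
  fix g x assume g: "g \<in> car A" "g \<noteq> zer A" and x: "x \<in> car A"
  show "((\<lambda>y. y \<ominus> g) ^^ card (car A)) x = zer A"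
  proof (rule funpow_reaches_fixpoint[where S = "car A" and \<mu> = order.height])
    show "order.height (y \<ominus> g) < order.height y" if "y \<in> car A" "y \<noteq> zer A" for y
      using order.height_strict_mono[OF that(1) diff_closed[OF that(1) g(1)]
        diff_below[OF that(1) g(1)]]
        diff_neq_self[OF that(1) g(1) that(2) g(2)] by blast
  qed (use g x zero_diff zero_closed diff_closed order.height_le_card in auto)
qed

end


section \<open>Terms, identities and generated subalgebras\<close>

primrec vars :: "trm \<Rightarrow> nat set" where
  "vars (Var n) = {n}"
| "vars Zero = {}"
| "vars (Minus s t) = vars s \<union> vars t"

primrec subst :: "(nat \<Rightarrow> trm) \<Rightarrow> trm \<Rightarrow> trm" where
  "subst \<sigma> (Var n) = \<sigma> n"
| "subst \<sigma> Zero = Zero"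
| "subst \<sigma> (Minus s t) = Minus (subst \<sigma> s) (subst \<sigma> t)"

lemma finite_vars: "finite (vars r)"
  by (induction r) auto

lemma eval_cong: "(\<forall>i\<in>vars r. v i = v' i) \<Longrightarrow> eval X v r = eval X v' r"
  by (induction r) auto

lemma eval_subst: "eval X v (subst \<sigma> r) = eval X (\<lambda>i. eval X v (\<sigma> i)) r"
  by (induction r) auto

lemma vars_subst: "(\<forall>i. vars (\<sigma> i) \<subseteq> V) \<Longrightarrow> vars (subst \<sigma> r) \<subseteq> V"
  by (induction r) auto

lemma eval_subalg: "eval (subalg X S) v r = eval X v r"
  by (induction r) (auto simp: subalg_def)

abbreviation closed :: "'c alg \<Rightarrow> bool" where
  "closed X \<equiv> is_subuniverse X (car X)"

lemma eval_in_subuniverse: "is_subuniverse X S \<Longrightarrow> (\<forall>i. v i \<in> S) \<Longrightarrow> eval X v r \<in> S"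
  by (induction r) (auto simp: is_subuniverse_def)

text \<open>The laws of BCK-algebras other than the first axiom and commutativity; unlike the
  full axioms, they are easily checked for the algebras \<open>B\<^sub>a\<close> below.\<close>

definition weak_bck :: "'c alg \<Rightarrow> bool" where
  "weak_bck X \<longleftrightarrow> closed X \<and>
     (\<forall>x\<in>car X. opr X x (zer X) = x) \<and> (\<forall>x\<in>car X. opr X (zer X) x = zer X) \<and>
     (\<forall>x\<in>car X. opr X x x = zer X) \<and>
     (\<forall>x\<in>car X. \<forall>y\<in>car X. opr X x y = zer X \<and> opr X y x = zer X \<longrightarrow> x = y)"

lemma weak_bck_closed: "weak_bck X \<Longrightarrow> closed X"
  and weak_bck_diff_zero: "weak_bck X \<Longrightarrow> x \<in> car X \<Longrightarrow> opr X x (zer X) = x"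
  and weak_bck_zero_diff: "weak_bck X \<Longrightarrow> x \<in> car X \<Longrightarrow> opr X (zer X) x = zer X"
  and weak_bck_diff_self: "weak_bck X \<Longrightarrow> x \<in> car X \<Longrightarrow> opr X x x = zer X"
  and weak_bck_antisym: "weak_bck X \<Longrightarrow> x \<in> car X \<Longrightarrow> y \<in> car X \<Longrightarrow>
    opr X x y = zer X \<Longrightarrow> opr X y x = zer X \<Longrightarrow> x = y"
  unfolding weak_bck_def by blast+

lemma (in cbck) weak_bck: "weak_bck A"
  unfolding weak_bck_def is_subuniverse_def
  using zero_closed diff_closed diff_zero zero_diff diff_self below_antisym by blast

lemma weak_bck_subalg: "weak_bck X \<Longrightarrow> is_subuniverse X S \<Longrightarrow> weak_bck (subalg X S)"
  unfolding weak_bck_def is_subuniverse_def subalg_def by (simp add: subset_iff)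

lemma iterated_diff_vanishes_subalg:
  "iterated_diff_vanishes X N \<Longrightarrow> is_subuniverse X S \<Longrightarrow> iterated_diff_vanishes (subalg X S) N"
  unfolding iterated_diff_vanishes_def is_subuniverse_def subalg_def by (simp add: subset_iff)

lemma subuniverse_of_subalg:
  "is_subuniverse X S \<Longrightarrow> is_subuniverse (subalg X S) G \<Longrightarrow> is_subuniverse X G"
  unfolding is_subuniverse_def subalg_def by auto

lemma Ids_le_if_iso_to_sub:
  assumes Y: "closed Y" and iso: "iso_to_sub Y X"
  shows "Ids X \<subseteq> Ids Y"
proof
  fix p assume pX: "p \<in> Ids X"
  obtain s t where p: "p = (s, t)" by (cases p)
  obtain S f where S: "is_subuniverse X S" and bij: "bij_betw f (car Y) S"
    and f0: "f (zer Y) = zer X" and hom: "\<forall>x\<in>car Y. \<forall>y\<in>car Y. f (opr Y x y) = opr X (f x) (f y)"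
    using iso unfolding iso_to_sub_def iso_def subalg_def by auto
  have eval_f: "f (eval Y v r) = eval X (f \<circ> v) r" if v: "\<forall>i. v i \<in> car Y" for v r
    by (induction r) (use f0 hom eval_in_subuniverse[OF Y v] in auto)
  show "p \<in> Ids Y" unfolding Ids_def p
  proof (clarify)
    fix v :: "nat \<Rightarrow> _" assume v: "\<forall>n. v n \<in> car Y"
    have "\<forall>n. (f \<circ> v) n \<in> car X" using v bij S unfolding bij_betw_def is_subuniverse_def by auto
    then have "f (eval Y v s) = f (eval Y v t)" using pX p eval_f[OF v] unfolding Ids_def by auto
    then show "eval Y v s = eval Y v t"
      using bij eval_in_subuniverse[OF Y v] unfolding bij_betw_def inj_on_def by blast
  qed
qed

definition minus_list :: "trm \<Rightarrow> trm list \<Rightarrow> trm" where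
  "minus_list d gs = foldl Minus d gs"

lemma minus_list_Nil [simp]: "minus_list d [] = d"
  and minus_list_Cons [simp]: "minus_list d (g # gs) = minus_list (Minus d g) gs"
  and minus_list_append: "minus_list d (gs @ hs) = minus_list (minus_list d gs) hs"
  unfolding minus_list_def by simp_all

lemma vars_minus_list: "vars (minus_list d gs) = vars d \<union> \<Union> (vars ` set gs)"
  by (induction gs arbitrary: d) auto

lemma eval_minus_list_vanishing:
  assumes "weak_bck X" "\<forall>i. w i \<in> car X" "\<forall>g\<in>set gs. eval X w g = zer X"
  shows "eval X w (minus_list d gs) = eval X w d"
  using assms(3)
  by (induction gs arbitrary: d)
    (auto simp: weak_bck_diff_zero[OF assms(1)]
      eval_in_subuniverse[OF weak_bck_closed[OF assms(1)] assms(2)])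

lemma eval_minus_list_zero:
  assumes "weak_bck X" "\<forall>i. w i \<in> car X" "eval X w d = zer X"
  shows "eval X w (minus_list d gs) = zer X"
  using assms(3)
  by (induction gs arbitrary: d)
    (auto simp: weak_bck_zero_diff[OF assms(1)]
      eval_in_subuniverse[OF weak_bck_closed[OF assms(1)] assms(2)])

lemma exists_nonzero_difference:
  assumes K: "weak_bck K" and st: "(s, t) \<notin> Ids K"
  obtains v d where "\<forall>i. v i \<in> car K" "d = Minus s t \<or> d = Minus t s" "eval K v d \<noteq> zer K"
proof -
  obtain v where v: "\<forall>i. v i \<in> car K" "eval K v s \<noteq> eval K v t" using st unfolding Ids_def by auto
  then have "eval K v (Minus s t) \<noteq> zer K \<or> eval K v (Minus t s) \<noteq> zer K"
    using weak_bck_antisym[OF K] eval_in_subuniverse[OF weak_bck_closed[OF K] v(1)] by auto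
  then show ?thesis using that v(1) by blast
qed

lemma minus_list_difference_in_Ids:
  assumes X: "weak_bck X" and st: "(s, t) \<in> Ids X" and d: "d = Minus s t \<or> d = Minus t s"
  shows "(minus_list d gs, Zero) \<in> Ids X"
  unfolding Ids_def
proof (clarify)
  fix v :: "nat \<Rightarrow> _" assume v: "\<forall>i. v i \<in> car X"
  have "eval X v s = eval X v t" using st v unfolding Ids_def by auto
  then have "eval X v d = zer X"
    using d weak_bck_diff_self[OF X] eval_in_subuniverse[OF weak_bck_closed[OF X] v] by auto
  then show "eval X v (minus_list d gs) = eval X v Zero"
    using eval_minus_list_zero[OF X v] by simp
qed

lemma eval_minus_list_replicate:
  "eval X w (minus_list d (replicate N g)) = ((\<lambda>y. opr X y (eval X w g)) ^^ N) (eval X w d)"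
  by (induction N arbitrary: d) (simp_all add: funpow_Suc_right del: funpow.simps)

lemma exists_killing_list:
  assumes "finite W" and X: "weak_bck X" "iterated_diff_vanishes X N"
    and "\<forall>w\<in>W. \<forall>i. w i \<in> car X" and "\<forall>w\<in>W. \<exists>g\<in>I. eval X w g \<noteq> zer X"
  shows "\<exists>gs. set gs \<subseteq> I \<and> (\<forall>w\<in>W. \<forall>d. eval X w (minus_list d gs) = zer X)"
  using assms(1,4,5)
proof (induction W rule: finite_induct)
  case empty
  then show ?case by (intro exI[of _ "[]"]) auto
next
  case (insert w W)
  obtain gs where gs: "set gs \<subseteq> I" "\<forall>w\<in>W. \<forall>d. eval X w (minus_list d gs) = zer X"
    using insert by auto
  obtain g where g: "g \<in> I" "eval X w g \<noteq> zer X" using insert.prems by auto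
  have w: "\<forall>i. w i \<in> car X" using insert.prems by auto
  have "eval X w (minus_list d (replicate N g)) = zer X" for d
    using X(2) eval_in_subuniverse[OF weak_bck_closed[OF X(1)] w] g(2)
    unfolding eval_minus_list_replicate iterated_diff_vanishes_def by blast
  then have "eval X w (minus_list d (replicate N g @ gs)) = zer X" for d
    using eval_minus_list_zero[OF X(1) w] by (simp add: minus_list_append)
  moreover have "eval X w' (minus_list d (replicate N g @ gs)) = zer X" if "w' \<in> W" for w' d
    using gs(2) that by (simp add: minus_list_append)
  ultimately show ?case using gs(1) g(1) by (intro exI[of _ "replicate N g @ gs"]) auto
qed

definition assignments :: "'c alg \<Rightarrow> nat \<Rightarrow> (nat \<Rightarrow> 'c) set" where
  "assignments X n = {w. \<forall>i. (i \<in> {..<n} \<longrightarrow> w i \<in> car X) \<and> (i \<notin> {..<n} \<longrightarrow> w i = zer X)}"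

lemma finite_assignments: "finite (car X) \<Longrightarrow> finite (assignments X n)"
  unfolding assignments_def by (rule finite_set_of_finite_funs) simp_all

lemma assignment_in_car: "closed X \<Longrightarrow> w \<in> assignments X n \<Longrightarrow> w i \<in> car X"
  unfolding assignments_def is_subuniverse_def by (cases "i < n") auto

lemma mem_Ids_if_eval_eq_on_assignments:
  assumes X: "closed X" and vars: "vars r \<subseteq> {..<n}" "vars r' \<subseteq> {..<n}"
    and eq: "\<forall>w\<in>assignments X n. eval X w r = eval X w r'"
  shows "(r, r') \<in> Ids X"
  unfolding Ids_def
proof (clarify)
  fix v :: "nat \<Rightarrow> _" assume v: "\<forall>i. v i \<in> car X"
  define w where "w = (\<lambda>i. if i < n then v i else zer X)"
  have "w \<in> assignments X n" unfolding w_def assignments_def using v by auto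
  moreover have "eval X w r = eval X v r" "eval X w r' = eval X v r'"
    using vars by (auto intro!: eval_cong simp: w_def)
  ultimately show "eval X v r = eval X v r'" using eq by metis
qed

definition vanishing_terms :: "'c alg \<Rightarrow> (nat \<Rightarrow> 'c) \<Rightarrow> nat \<Rightarrow> trm set" where
  "vanishing_terms X w n = {g. vars g \<subseteq> {..<n} \<and> eval X w g = zer X}"

text \<open>If no such \<open>w\<close> existed, each of the finitely many assignments \<open>w\<close> with \<open>d(w) \<noteq> 0\<close> could be
  killed by subtracting, \<open>N\<close> times, a term vanishing at \<open>u\<close> but not at \<open>w\<close>; the result is an
  identity \<open>d \<ominus> g\<^sub>1 \<ominus> \<dots> \<ominus> g\<^sub>k = 0\<close> of \<open>X\<close> that fails at \<open>u\<close>.\<close>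

lemma exists_separating_assignment:
  fixes X :: "'c alg" and Y :: "'d alg"
  assumes X: "weak_bck X" "finite (car X)" "iterated_diff_vanishes X N"
    and Y: "weak_bck Y" "\<forall>i. u i \<in> car Y"
    and d: "vars d \<subseteq> {..<n}" "eval Y u d \<noteq> zer Y"
    and identities: "\<And>gs. (minus_list d gs, Zero) \<in> Ids X \<Longrightarrow> (minus_list d gs, Zero) \<in> Ids Y"
  shows "\<exists>w\<in>assignments X n. eval X w d \<noteq> zer X \<and> vanishing_terms Y u n \<subseteq> vanishing_terms X w n"
proof (rule ccontr)
  assume no_witness: "\<not> ?thesis"
  define W where "W = {w \<in> assignments X n. eval X w d \<noteq> zer X}"
  have in_car: "\<forall>i. w i \<in> car X" if "w \<in> assignments X n" for w
    using assignment_in_car[OF weak_bck_closed[OF X(1)] that] by blast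
  have "finite W" using finite_assignments[OF X(2)] unfolding W_def by simp
  moreover have "\<forall>w\<in>W. \<forall>i. w i \<in> car X" using in_car unfolding W_def by blast
  moreover have "\<forall>w\<in>W. \<exists>g\<in>vanishing_terms Y u n. eval X w g \<noteq> zer X"
    using no_witness unfolding W_def vanishing_terms_def by blast
  ultimately obtain gs where gs: "set gs \<subseteq> vanishing_terms Y u n"
    and killed: "\<forall>w\<in>W. \<forall>d. eval X w (minus_list d gs) = zer X"
    using exists_killing_list[OF _ X(1,3)] by blast
  have "\<forall>w\<in>assignments X n. eval X w (minus_list d gs) = eval X w Zero"
    using killed eval_minus_list_zero[OF X(1) in_car] unfolding W_def by auto
  moreover have "vars (minus_list d gs) \<subseteq> {..<n}"
    using d(1) gs unfolding vars_minus_list vanishing_terms_def by auto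
  ultimately have "(minus_list d gs, Zero) \<in> Ids Y"
    using identities mem_Ids_if_eval_eq_on_assignments[OF weak_bck_closed[OF X(1)]] by simp
  then have "eval Y u (minus_list d gs) = zer Y" using Y(2) unfolding Ids_def by auto
  moreover have "eval Y u (minus_list d gs) = eval Y u d"
    using eval_minus_list_vanishing[OF Y] gs unfolding vanishing_terms_def by auto
  ultimately show False using d(2) by simp
qed

lemma eval_eq_transfer:
  assumes X: "weak_bck X" "\<forall>i. w i \<in> car X" and Y: "weak_bck Y" "\<forall>i. u i \<in> car Y"
    and vanishing: "vanishing_terms Y u n \<subseteq> vanishing_terms X w n"
    and "vars r \<subseteq> {..<n}" "vars r' \<subseteq> {..<n}" "eval Y u r = eval Y u r'"
  shows "eval X w r = eval X w r'"
proof -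
  have "Minus r r' \<in> vanishing_terms Y u n" "Minus r' r \<in> vanishing_terms Y u n"
    using assms(6-8)
      weak_bck_diff_self[OF Y(1) eval_in_subuniverse[OF weak_bck_closed[OF Y(1)] Y(2)]]
    unfolding vanishing_terms_def by auto
  then have "Minus r r' \<in> vanishing_terms X w n" "Minus r' r \<in> vanishing_terms X w n"
    using vanishing by blast+
  then have "opr X (eval X w r) (eval X w r') = zer X" "opr X (eval X w r') (eval X w r) = zer X"
    unfolding vanishing_terms_def by simp_all
  then show ?thesis
    using weak_bck_antisym[OF X(1)] eval_in_subuniverse[OF weak_bck_closed[OF X(1)] X(2)] by blast
qed

definition generated :: "'c alg \<Rightarrow> (nat \<Rightarrow> 'c) \<Rightarrow> nat \<Rightarrow> 'c set" where
  "generated X w n = {eval X w r | r. vars r \<subseteq> {..<n}}"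

lemma subuniverse_generated:
  assumes "closed X" "\<forall>i. w i \<in> car X"
  shows "is_subuniverse X (generated X w n)"
  unfolding is_subuniverse_def generated_def
proof (intro conjI ballI)
  show "{eval X w r |r. vars r \<subseteq> {..<n}} \<subseteq> car X" using eval_in_subuniverse[OF assms] by blast
  show "zer X \<in> {eval X w r |r. vars r \<subseteq> {..<n}}" by (intro CollectI exI[of _ Zero]) simp
next
  fix x y assume "x \<in> {eval X w r |r. vars r \<subseteq> {..<n}}" "y \<in> {eval X w r |r. vars r \<subseteq> {..<n}}"
  then obtain r r' where "vars r \<subseteq> {..<n}" "x = eval X w r" "vars r' \<subseteq> {..<n}" "y = eval X w r'"
    by blast
  then show "opr X x y \<in> {eval X w r |r. vars r \<subseteq> {..<n}}"
    by (intro CollectI exI[of _ "Minus r r'"]) simp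
qed

lemma assignment_in_generated:
  assumes "w \<in> assignments X n"
  shows "w i \<in> generated X w n"
proof (cases "i < n")
  case True
  then show ?thesis unfolding generated_def by (intro CollectI exI[of _ "Var i"]) simp
next
  case False
  then have "w i = zer X" using assms unfolding assignments_def by simp
  then show ?thesis unfolding generated_def by (intro CollectI exI[of _ Zero]) simp
qed

text \<open>Under these hypotheses \<open>Y\<close> is a homomorphic image of the subalgebra of \<open>K\<close> generated
  by \<open>v\<close>.\<close>

lemma Ids_le_if_generated_image:
  assumes K: "closed K" "\<forall>i. v i \<in> car K" and Y: "car Y \<subseteq> generated Y u n"
    and relations: "\<And>r r'. vars r \<subseteq> {..<n} \<Longrightarrow> vars r' \<subseteq> {..<n} \<Longrightarrow>
      eval K v r = eval K v r' \<Longrightarrow> eval Y u r = eval Y u r'"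
  shows "Ids K \<subseteq> Ids Y"
proof (rule subsetI, clarify)
  fix p q assume pqK: "(p, q) \<in> Ids K"
  have "eval Y y p = eval Y y q" if y: "\<forall>i. y i \<in> car Y" for y
  proof -
    have "\<forall>i. \<exists>r. vars r \<subseteq> {..<n} \<and> eval Y u r = y i"
    proof
      fix i
      have "y i \<in> generated Y u n" using y Y by (simp add: subset_iff)
      then show "\<exists>r. vars r \<subseteq> {..<n} \<and> eval Y u r = y i" unfolding generated_def by auto
    qed
    then obtain \<sigma> where \<sigma>: "\<And>i. vars (\<sigma> i) \<subseteq> {..<n}" "\<And>i. eval Y u (\<sigma> i) = y i"
      by metis
    have "eval K v (subst \<sigma> p) = eval K v (subst \<sigma> q)"
      using pqK eval_in_subuniverse[OF K] unfolding Ids_def eval_subst by simp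
    then have "eval Y u (subst \<sigma> p) = eval Y u (subst \<sigma> q)"
      using relations vars_subst \<sigma>(1) by blast
    then show ?thesis unfolding eval_subst \<sigma>(2) by simp
  qed
  then show "(p, q) \<in> Ids Y" unfolding Ids_def by simp
qed

lemma exists_hom_from_generated:
  assumes "\<And>r r'. vars r \<subseteq> {..<n} \<Longrightarrow> vars r' \<subseteq> {..<n} \<Longrightarrow>
      eval Y u r = eval Y u r' \<Longrightarrow> eval X w r = eval X w r'"
  shows "\<exists>h. \<forall>r. vars r \<subseteq> {..<n} \<longrightarrow> h (eval Y u r) = eval X w r"
proof -
  define h where "h y = eval X w (SOME r. vars r \<subseteq> {..<n} \<and> eval Y u r = y)" for y
  have "h (eval Y u r) = eval X w r" if "vars r \<subseteq> {..<n}" for r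
  proof -
    have "\<exists>r'. vars r' \<subseteq> {..<n} \<and> eval Y u r' = eval Y u r" using that by blast
    then show ?thesis unfolding h_def using someI_ex assms that by (metis (mono_tags, lifting))
  qed
  then show ?thesis by blast
qed

lemma is_cong_kernel:
  assumes hom: "\<forall>x\<in>car Y. \<forall>y\<in>car Y. h (opr Y x y) = opr X (h x) (h y)" and Y: "closed Y"
  shows "is_cong Y {(x, y). x \<in> car Y \<and> y \<in> car Y \<and> h x = h y}"
  unfolding is_cong_def
proof (intro conjI allI impI)
  show "equiv (car Y) {(x, y). x \<in> car Y \<and> y \<in> car Y \<and> h x = h y}"
    by (rule equivI) (auto simp: refl_on_def sym_def trans_def)
next
  fix x x' y y'
  assume "(x, x') \<in> {(x, y). x \<in> car Y \<and> y \<in> car Y \<and> h x = h y} \<and>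
    (y, y') \<in> {(x, y). x \<in> car Y \<and> y \<in> car Y \<and> h x = h y}"
  then show "(opr Y x y, opr Y x' y') \<in> {(x, y). x \<in> car Y \<and> y \<in> car Y \<and> h x = h y}"
    using hom Y unfolding is_subuniverse_def by auto
qed

text \<open>Once a nonzero \<open>g\<close> is collapsed to \<open>0\<close>, so is every \<open>x\<close>, being congruent to
  \<open>x \<ominus> g \<ominus> \<dots> \<ominus> g = 0\<close>.\<close>

lemma cong_trivial_or_total:
  assumes Y: "weak_bck Y" "iterated_diff_vanishes Y N" and cong: "is_cong Y \<theta>"
  shows "\<theta> \<subseteq> Id \<or> (\<forall>x\<in>car Y. (x, zer Y) \<in> \<theta>)"
proof (cases "\<theta> \<subseteq> Id")
  case False
  then obtain x y where xy: "(x, y) \<in> \<theta>" "x \<noteq> y" by auto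
  have eq: "equiv (car Y) \<theta>"
    and compat: "\<And>x x' y y'. (x, x') \<in> \<theta> \<Longrightarrow> (y, y') \<in> \<theta> \<Longrightarrow> (opr Y x y, opr Y x' y') \<in> \<theta>"
    using cong unfolding is_cong_def by auto
  have refl: "\<And>x. x \<in> car Y \<Longrightarrow> (x, x) \<in> \<theta>" and sym: "\<And>x y. (x, y) \<in> \<theta> \<Longrightarrow> (y, x) \<in> \<theta>"
    and in_car: "\<theta> \<subseteq> car Y \<times> car Y"
    using eq unfolding equiv_def refl_on_def sym_def by blast+
  have x: "x \<in> car Y" and y: "y \<in> car Y" using xy in_car by auto
  have "(opr Y x y, zer Y) \<in> \<theta>" "(opr Y y x, zer Y) \<in> \<theta>"
    using compat[OF xy(1) refl[OF y]] compat[OF sym[OF xy(1)] refl[OF x]]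
      weak_bck_diff_self[OF Y(1)] x y by auto
  then obtain g where g: "g \<in> car Y" "g \<noteq> zer Y" "(g, zer Y) \<in> \<theta>"
    using weak_bck_antisym[OF Y(1) x y] xy(2) weak_bck_closed[OF Y(1)] x y
    unfolding is_subuniverse_def by metis
  have "(z, zer Y) \<in> \<theta>" if z: "z \<in> car Y" for z
  proof -
    have "(((\<lambda>y. opr Y y g) ^^ k) z, z) \<in> \<theta>" for k
    proof (induction k)
      case 0
      show ?case using refl[OF z] by simp
    next
      case (Suc k)
      show ?case using compat[OF Suc g(3)] weak_bck_diff_zero[OF Y(1) z] by simp
    qed
    moreover have "((\<lambda>y. opr Y y g) ^^ N) z = zer Y"
      using Y(2) g z unfolding iterated_diff_vanishes_def by blast
    ultimately show ?thesis using sym by metis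
  qed
  then show ?thesis by blast
qed simp

lemma inj_on_hom_if_nonzero_value:
  assumes Y: "weak_bck Y" "iterated_diff_vanishes Y N"
    and hom: "\<forall>x\<in>car Y. \<forall>y\<in>car Y. h (opr Y x y) = opr X (h x) (h y)" "h (zer Y) = zer X"
    and "y0 \<in> car Y" "h y0 \<noteq> zer X"
  shows "inj_on h (car Y)"
  using cong_trivial_or_total[OF Y is_cong_kernel[OF hom(1) weak_bck_closed[OF Y(1)]]]
    assms(5,6) hom(2)
  unfolding inj_on_def by auto

lemma iso_to_sub_if_inj_hom:
  assumes Y: "closed Y" and h: "h ` car Y \<subseteq> car X" "h (zer Y) = zer X"
    "\<forall>x\<in>car Y. \<forall>y\<in>car Y. h (opr Y x y) = opr X (h x) (h y)" "inj_on h (car Y)"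
  shows "iso_to_sub Y X"
  unfolding iso_to_sub_def
proof (intro exI conjI)
  have "opr X (h x) (h y) \<in> h ` car Y" if "x \<in> car Y" "y \<in> car Y" for x y
    using h(3) Y that unfolding is_subuniverse_def by (metis image_eqI)
  then show "is_subuniverse X (h ` car Y)"
    using Y h(1,2) unfolding is_subuniverse_def by (auto intro: image_eqI[where x = "zer Y"])
  show "iso Y (subalg X (h ` car Y))"
    unfolding iso_def subalg_def using h by (auto simp: bij_betw_def)
qed

lemma exists_enumeration:
  assumes "finite S" "c \<in> S"
  obtains u :: "nat \<Rightarrow> 'c" where "\<forall>i. u i \<in> S" "S \<subseteq> u ` {..<card S}"
proof -
  obtain f where f: "bij_betw f {0..<card S} S" using ex_bij_betw_nat_finite[OF assms(1)] by blast
  define u where "u i = (if i < card S then f i else c)" for i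
  have "\<forall>i. u i \<in> S" unfolding u_def using f assms(2) bij_betwE by fastforce
  moreover have "S \<subseteq> u ` {..<card S}"
    using f unfolding u_def bij_betw_def by (auto simp: image_iff lessThan_atLeast0)
  ultimately show ?thesis using that by blast
qed

text \<open>\<open>Y\<close> is generated by an enumeration \<open>u\<close> of its elements; an assignment separating a
  nonzero \<open>u i\<^sub>0\<close> from \<open>0\<close> and respecting the relations of \<open>u\<close> induces a homomorphism
  \<open>Y \<rightarrow> X\<close> whose kernel is not total, hence trivial.\<close>

theorem iso_to_sub_if_Ids_le:
  fixes X :: "'c alg" and Y :: "'d alg"
  assumes X: "weak_bck X" "finite (car X)" "iterated_diff_vanishes X N"
    and Y: "weak_bck Y" "finite (car Y)" "iterated_diff_vanishes Y M" "y0 \<in> car Y" "y0 \<noteq> zer Y"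
    and Ids: "Ids X \<subseteq> Ids Y"
  shows "iso_to_sub Y X"
proof -
  define n where "n = card (car Y)"
  obtain u where u: "\<forall>i. u i \<in> car Y" "car Y \<subseteq> u ` {..<n}"
    using exists_enumeration[OF Y(2,4)] unfolding n_def by blast
  then obtain i0 where i0: "i0 < n" "u i0 = y0" using Y(4) by blast
  obtain w where w: "w \<in> assignments X n" "w i0 \<noteq> zer X"
    and vanishing: "vanishing_terms Y u n \<subseteq> vanishing_terms X w n"
    using exists_separating_assignment[OF X Y(1) u(1), where d = "Var i0" and n = n] i0 Y(5) Ids
    by auto
  have w_car: "\<forall>i. w i \<in> car X" using assignment_in_car[OF weak_bck_closed[OF X(1)] w(1)] by blast
  obtain h where h: "\<And>r. vars r \<subseteq> {..<n} \<Longrightarrow> h (eval Y u r) = eval X w r"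
    using exists_hom_from_generated eval_eq_transfer[OF X(1) w_car Y(1) u(1) vanishing] by metis
  have h_u: "h (u i) = w i" if "i < n" for i using h[of "Var i"] that by simp
  have every_u: "\<exists>i<n. x = u i" if "x \<in> car Y" for x using u(2) that by auto
  have "h ` car Y \<subseteq> car X" using every_u h_u w_car by (metis image_subsetI)
  moreover have "h (zer Y) = zer X" using h[of Zero] by simp
  moreover have hom: "\<forall>x\<in>car Y. \<forall>y\<in>car Y. h (opr Y x y) = opr X (h x) (h y)"
  proof (intro ballI)
    fix x y assume "x \<in> car Y" "y \<in> car Y"
    then obtain i j where "i < n" "x = u i" "j < n" "y = u j" using every_u by blast
    then show "h (opr Y x y) = opr X (h x) (h y)" using h[of "Minus (Var i) (Var j)"] h_u by simp
  qed
  moreover have "inj_on h (car Y)"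
    using inj_on_hom_if_nonzero_value[OF Y(1,3) hom] h[of Zero] Y(4) w(2) h_u i0 by auto
  ultimately show ?thesis using iso_to_sub_if_inj_hom weak_bck_closed[OF Y(1)] by blast
qed


section \<open>The one-point extensions \<open>B\<^sub>a\<close>\<close>

locale extension = finite_si_cbck A for A :: "'a alg" +
  fixes B :: "'a set" and a :: 'a
  assumes subuniverse_B: "is_subuniverse A B" and a_in_B: "a \<in> B" and a_nonzero: "a \<noteq> zer A"
begin

abbreviation T :: "'a option set" where "T \<equiv> insert None (Some ` B)"
abbreviation ext_diff :: "'a option \<Rightarrow> 'a option \<Rightarrow> 'a option" (infixl "\<ominus>\<^sub>T" 65) where
  "x \<ominus>\<^sub>T y \<equiv> tree_op T (ext_le A a) x y"
abbreviation E :: "'a option alg" where "E \<equiv> ext_alg A B a"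

lemma B_subset: "B \<subseteq> car A" and zero_in_B: "zer A \<in> B"
  and diff_in_B: "x \<in> B \<Longrightarrow> y \<in> B \<Longrightarrow> x \<ominus> y \<in> B"
  using subuniverse_B unfolding is_subuniverse_def by auto

lemma in_car_if_in_B: "x \<in> B \<Longrightarrow> x \<in> car A"
  using B_subset by blast

lemma finite_B: "finite B"
  using finite_carrier B_subset finite_subset by auto

lemma car_E: "car E = T"
  and opr_E: "opr E = tree_op T (ext_le A a)" and zer_E: "zer E = Some (zer A)"
  unfolding ext_alg_def by simp_all

text \<open>The new element \<open>c\<close> is \<open>None\<close>. Since it covers \<open>a\<close>, sending it to \<open>a\<close> gives
  \<open>ext_le A a (Some u) x \<longleftrightarrow> u \<preceq> proj x\<close> for all \<open>x\<close>.\<close>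

definition proj :: "'a option \<Rightarrow> 'a" where
  "proj x = (case x of None \<Rightarrow> a | Some u \<Rightarrow> u)"

lemma proj_in_B: "x \<in> T \<Longrightarrow> proj x \<in> B"
  using a_in_B unfolding proj_def by auto

lemma proj_eq_zero_iff: "x \<in> T \<Longrightarrow> proj x = zer A \<longleftrightarrow> x = Some (zer A)"
  using a_nonzero unfolding proj_def by auto

lemma ext_le_Some_iff: "ext_le A a (Some u) x \<longleftrightarrow> u \<preceq> proj x"
  unfolding proj_def by (cases x) simp_all

lemma ext_le_None_iff: "ext_le A a None x \<longleftrightarrow> x = None"
  by (cases x) simp_all

lemma proj_mono:
  assumes "x \<in> T" "ext_le A a x y"
  shows "proj x \<preceq> proj y"
proof (cases x)
  case None
  then show ?thesis
    using assms(2) ext_le_None_iff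
      diff_self[OF in_car_if_in_B[OF a_in_B]] unfolding proj_def by simp
next
  case (Some u)
  then show ?thesis using assms(2) ext_le_Some_iff unfolding proj_def by simp
qed

lemma ext_le_trans:
  assumes T: "x \<in> T" "y \<in> T" "w \<in> T" and le: "ext_le A a x y" "ext_le A a y w"
  shows "ext_le A a x w"
proof (cases x)
  case None
  then show ?thesis using le ext_le_None_iff by simp
next
  case (Some u)
  then have uy: "u \<preceq> proj y" using le(1) ext_le_Some_iff by simp
  have yw: "proj y \<preceq> proj w" by (rule proj_mono[OF T(2) le(2)])
  have "u \<in> B" using T(1) unfolding Some by (simp add: image_iff)
  then have "u \<preceq> proj w"
    using below_trans[OF in_car_if_in_B in_car_if_in_B[OF proj_in_B[OF T(2)]]
      in_car_if_in_B[OF proj_in_B[OF T(3)]] uy yw] by simp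
  then show ?thesis using Some ext_le_Some_iff by simp
qed

lemma ext_le_down_chain:
  assumes T: "x \<in> T" "y \<in> T" "y' \<in> T" and le: "ext_le A a y x" "ext_le A a y' x"
  shows "ext_le A a y y' \<or> ext_le A a y' y"
proof -
  consider "y = None" | "y' = None" | u u' where "y = Some u" "y' = Some u'" "u \<in> B" "u' \<in> B"
    using T(2,3) by blast
  then show ?thesis
  proof cases
    case 1
    then have "x = None" using le(1) ext_le_None_iff by simp
    then show ?thesis using le(2) 1 by simp
  next
    case 2
    then have "x = None" using le(2) ext_le_None_iff by simp
    then show ?thesis using le(1) 2 by simp
  next
    case (3 u u')
    then have "u \<preceq> proj x" "u' \<preceq> proj x" using le ext_le_Some_iff by simp_all
    then have "u \<preceq> u' \<or> u' \<preceq> u"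
      using comparable_if_common_upper_bound[OF in_car_if_in_B[OF 3(3)] in_car_if_in_B[OF 3(4)]
        in_car_if_in_B[OF proj_in_B[OF T(1)]]] by blast
    then show ?thesis using 3(1,2) by simp
  qed
qed

sublocale tree: finite_tree T "ext_le A a"
proof
  show "finite T" using finite_B by simp
next
  fix x assume "x \<in> T"
  then show "ext_le A a x x" using diff_self in_car_if_in_B by auto
next
  fix x y assume "x \<in> T" "y \<in> T" "ext_le A a x y" "ext_le A a y x"
  then show "x = y" by (cases x; cases y) (auto intro: below_antisym in_car_if_in_B)
next
  fix x y w assume "x \<in> T" "y \<in> T" "w \<in> T" "ext_le A a x y" "ext_le A a y w"
  then show "ext_le A a x w" by (rule ext_le_trans)
next
  fix x y y' assume "x \<in> T" "y \<in> T" "y' \<in> T" "ext_le A a y x" "ext_le A a y' x"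
  then show "ext_le A a y y' \<or> ext_le A a y' y" by (rule ext_le_down_chain)
qed

lemma tmeet_eq:
  assumes T: "x \<in> T" "y \<in> T" and not_both: "x \<noteq> None \<or> y \<noteq> None"
  shows "tmeet T (ext_le A a) x y = Some (proj x \<ominus> (proj x \<ominus> proj y))"
proof (rule tree.tmeet_eqI)
  have B: "proj x \<in> B" "proj y \<in> B" using proj_in_B T by auto
  then have S: "proj x \<in> car A" "proj y \<in> car A" using in_car_if_in_B by auto
  show "Some (proj x \<ominus> (proj x \<ominus> proj y)) \<in> T" using B diff_in_B by auto
  show "ext_le A a (Some (proj x \<ominus> (proj x \<ominus> proj y))) x"
    using meet_below_left[OF S] ext_le_Some_iff by simp
  show "ext_le A a (Some (proj x \<ominus> (proj x \<ominus> proj y))) y"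
    using meet_below_right[OF S] ext_le_Some_iff by simp
  show "\<forall>w\<in>T. ext_le A a w x \<and> ext_le A a w y \<longrightarrow> ext_le A a w (Some (proj x \<ominus> (proj x \<ominus> proj y)))"
  proof (intro ballI impI)
    fix w assume w: "w \<in> T" and le: "ext_le A a w x \<and> ext_le A a w y"
    then obtain v where v: "w = Some v" "v \<in> B" using not_both ext_le_None_iff by auto
    then have "v \<preceq> proj x" "v \<preceq> proj y" using le ext_le_Some_iff by auto
    then show "ext_le A a w (Some (proj x \<ominus> (proj x \<ominus> proj y)))"
      using meet_greatest[OF S in_car_if_in_B[OF v(2)]] v(1) by simp
  qed
qed

lemma tmeet_None: "tmeet T (ext_le A a) None None = None"
  by (rule tree.tmeet_eqI) (auto simp: ext_le_None_iff)

lemma tmeet_spec: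
  assumes T: "x \<in> T" "y \<in> T"
  shows "tmeet T (ext_le A a) x y \<in> T \<and> ext_le A a (tmeet T (ext_le A a) x y) x \<and>
    ext_le A a (tmeet T (ext_le A a) x y) y \<and>
    (x \<noteq> Some (zer A) \<longrightarrow> y \<noteq> Some (zer A) \<longrightarrow> tmeet T (ext_le A a) x y \<noteq> Some (zer A))"
proof (cases "x = None \<and> y = None")
  case True
  then show ?thesis using tmeet_None by simp
next
  case False
  have B: "proj x \<in> B" "proj y \<in> B" using proj_in_B T by auto
  then have S: "proj x \<in> car A" "proj y \<in> car A" using in_car_if_in_B by auto
  have m: "tmeet T (ext_le A a) x y = Some (proj x \<ominus> (proj x \<ominus> proj y))"
    using tmeet_eq[OF T] False by simp
  have "proj x \<ominus> (proj x \<ominus> proj y) \<in> B" using B diff_in_B by blast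
  moreover have "proj x \<ominus> (proj x \<ominus> proj y) \<noteq> zer A"
    if "x \<noteq> Some (zer A)" "y \<noteq> Some (zer A)"
    using meet_nonzero[OF S] proj_eq_zero_iff T that by blast
  ultimately show ?thesis
    unfolding m ext_le_Some_iff using meet_below_left[OF S] meet_below_right[OF S] by blast
qed

lemma down_Some: "down T (ext_le A a) (Some u) = Some ` down B (\<preceq>) u"
  unfolding down_def by (auto elim: ext_le.elims)

lemma height_Some: "tree.height (Some u) = card (down B (\<preceq>) u) - 1"
  unfolding hgt_def down_Some by (simp add: card_image)

lemma finite_down_B: "finite (down B (\<preceq>) x)"
  using finite_B unfolding down_def by simp

lemma mem_down_B_self: "x \<in> B \<Longrightarrow> x \<in> down B (\<preceq>) x"
  unfolding down_def using diff_self in_car_if_in_B by simp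

lemma down_split:
  assumes x: "x \<in> B" and w: "w \<in> B" "w \<preceq> x"
  shows "down B (\<preceq>) x = {v \<in> B. w \<preceq> v \<and> v \<preceq> x} \<union> (down B (\<preceq>) w - {w})"
proof (intro equalityI subsetI)
  fix v assume "v \<in> down B (\<preceq>) x"
  then have v: "v \<in> B" "v \<preceq> x" unfolding down_def by auto
  then have "v \<preceq> w \<or> w \<preceq> v"
    using comparable_if_common_upper_bound in_car_if_in_B x w by blast
  then show "v \<in> {v \<in> B. w \<preceq> v \<and> v \<preceq> x} \<union> (down B (\<preceq>) w - {w})"
    using v diff_self[OF in_car_if_in_B[OF w(1)]] unfolding down_def by auto
next
  fix v assume "v \<in> {v \<in> B. w \<preceq> v \<and> v \<preceq> x} \<union> (down B (\<preceq>) w - {w})"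
  then have "v \<in> B" "v \<preceq> x"
    using below_trans[OF in_car_if_in_B in_car_if_in_B[OF w(1)] in_car_if_in_B[OF x] _ w(2)]
    unfolding down_def by auto
  then show "v \<in> down B (\<preceq>) x" unfolding down_def by simp
qed

lemma bij_betw_diff_interval:
  assumes x: "x \<in> B" and w: "w \<in> B" "w \<preceq> x"
  shows "bij_betw (\<lambda>v. x \<ominus> v) {v \<in> B. w \<preceq> v \<and> v \<preceq> x} (down B (\<preceq>) (x \<ominus> w))"
proof -
  have xA: "x \<in> car A" and wA: "w \<in> car A" using x w in_car_if_in_B by auto
  have maps: "x \<ominus> v \<in> down B (\<preceq>) (x \<ominus> w)" if "v \<in> B" "w \<preceq> v" for v
    using diff_in_B[OF x that(1)] diff_antimono[OF xA wA in_car_if_in_B[OF that(1)] that(2)]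
    unfolding down_def by simp
  have inverse: "x \<ominus> (x \<ominus> v) = v" if "v \<in> B" "v \<preceq> x" for v
    using meet_eq_left[OF xA in_car_if_in_B[OF that(1)] that(2)] .
  have onto: "v' \<in> (\<lambda>v. x \<ominus> v) ` {v \<in> B. w \<preceq> v \<and> v \<preceq> x}" if "v' \<in> down B (\<preceq>) (x \<ominus> w)" for v'
  proof -
    have v': "v' \<in> B" "v' \<preceq> x \<ominus> w" using that unfolding down_def by auto
    have v'A: "v' \<in> car A" using in_car_if_in_B[OF v'(1)] .
    have "v' \<preceq> x"
      using below_trans[OF v'A diff_closed[OF xA wA] xA v'(2) diff_below[OF xA wA]] .
    moreover have "w \<preceq> x \<ominus> v'"
      using diff_antimono[OF xA v'A diff_closed[OF xA wA] v'(2)] meet_eq_left[OF xA wA w(2)] by simp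
    ultimately show ?thesis
      using inverse[OF v'(1)] diff_in_B[OF x v'(1)] diff_below[OF xA v'A]
      by (auto intro!: image_eqI)
  qed
  show ?thesis
    unfolding bij_betw_def inj_on_def using maps inverse onto by (auto simp: image_subset_iff) metis
qed

lemma card_down_diff:
  assumes x: "x \<in> B" and w: "w \<in> B" "w \<preceq> x"
  shows "card (down B (\<preceq>) (x \<ominus> w)) + card (down B (\<preceq>) w) = card (down B (\<preceq>) x) + 1"
proof -
  have disjoint: "{v \<in> B. w \<preceq> v \<and> v \<preceq> x} \<inter> (down B (\<preceq>) w - {w}) = {}"
    using below_antisym in_car_if_in_B[OF w(1)] in_car_if_in_B unfolding down_def by auto
  have "card (down B (\<preceq>) x) = card {v \<in> B. w \<preceq> v \<and> v \<preceq> x} + card (down B (\<preceq>) w - {w})"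
    unfolding down_split[OF assms] using finite_B disjoint
      by (intro card_Un_disjoint) (auto simp: down_def)
  moreover have "card (down B (\<preceq>) w) = card (down B (\<preceq>) w - {w}) + 1"
    using card_Suc_Diff1[OF finite_down_B mem_down_B_self[OF w(1)]] by simp
  moreover have "card (down B (\<preceq>) (x \<ominus> w)) = card {v \<in> B. w \<preceq> v \<and> v \<preceq> x}"
    using bij_betw_same_card[OF bij_betw_diff_interval[OF assms]] by simp
  ultimately show ?thesis by simp
qed

lemma tree_op_Some:
  assumes u: "u \<in> B" and v: "v \<in> B"
  shows "Some u \<ominus>\<^sub>T Some v = Some (u \<ominus> v)"
proof (rule tree.tree_op_eqI)
  have uA: "u \<in> car A" and vA: "v \<in> car A" using u v in_car_if_in_B by auto
  define m where "m = u \<ominus> (u \<ominus> v)"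
  have m: "m \<in> B" "m \<preceq> u" "u \<ominus> m = u \<ominus> v"
    unfolding m_def using diff_in_B u v meet_below_left[OF uA vA] diff_meet[OF uA vA] by auto
  have "card (down B (\<preceq>) (u \<ominus> v)) + card (down B (\<preceq>) m) = card (down B (\<preceq>) u) + 1"
    using card_down_diff[OF u m(1,2)] m(3) by simp
  moreover have "card (down B (\<preceq>) m) > 0"
    using finite_down_B mem_down_B_self[OF m(1)] card_gt_0_iff by blast
  moreover have meet: "tmeet T (ext_le A a) (Some u) (Some v) = Some m"
    using tmeet_eq[of "Some u" "Some v"] u v unfolding m_def proj_def by simp
  ultimately show "tree.height (Some (u \<ominus> v)) =
      tree.height (Some u) - tree.height (tmeet T (ext_le A a) (Some u) (Some v))"
    unfolding meet height_Some by simp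
  show "Some u \<in> T" "Some (u \<ominus> v) \<in> T" using u v diff_in_B by auto
  show "ext_le A a (Some (u \<ominus> v)) (Some u)" using diff_below[OF uA vA] by simp
qed

lemma zero_in_T: "Some (zer A) \<in> T"
  using zero_in_B by simp

lemma zero_below: "x \<in> T \<Longrightarrow> ext_le A a (Some (zer A)) x"
  using ext_le_Some_iff zero_diff in_car_if_in_B[OF proj_in_B] by simp

lemma eq_zero_if_below_zero: "x \<in> T \<Longrightarrow> ext_le A a x (Some (zer A)) \<Longrightarrow> x = Some (zer A)"
  using tree.antisym zero_in_T zero_below by blast

lemma height_zero: "tree.height (Some (zer A)) = 0"
proof -
  have "down B (\<preceq>) (zer A) = {zer A}"
    using zero_in_B zero_diff[OF zero_closed] below_zero in_car_if_in_B unfolding down_def by auto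
  then show ?thesis unfolding height_Some by simp
qed

lemma tree_op_self: "x \<in> T \<Longrightarrow> x \<ominus>\<^sub>T x = Some (zer A)"
proof -
  assume x: "x \<in> T"
  have "tmeet T (ext_le A a) x x = x" by (rule tree.tmeet_eqI) (use x tree.refl in auto)
  then show ?thesis by (intro tree.tree_op_eqI[OF x zero_in_T zero_below[OF x]])
    (simp add: height_zero)
qed

lemma zero_tree_op: "Some (zer A) \<ominus>\<^sub>T y = Some (zer A)"
  using tree.tree_op_spec[OF zero_in_T, of y] eq_zero_if_below_zero by blast

lemma tree_op_zero: "x \<in> T \<Longrightarrow> x \<ominus>\<^sub>T Some (zer A) = x"
proof -
  assume x: "x \<in> T"
  have "tmeet T (ext_le A a) x (Some (zer A)) = Some (zer A)"
    by (rule tree.tmeet_eqI)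
    (use x zero_in_T zero_below tree.refl[OF zero_in_T] eq_zero_if_below_zero in auto)
  then show ?thesis by (intro tree.tree_op_eqI[OF x x tree.refl[OF x]]) (simp add: height_zero)
qed

lemma tree_op_closed: "x \<in> T \<Longrightarrow> x \<ominus>\<^sub>T y \<in> T"
  using tree.tree_op_spec[of x y] by simp

lemma below_if_tree_op_zero:
  assumes x: "x \<in> T" and y: "y \<in> T" and xy: "x \<ominus>\<^sub>T y = Some (zer A)"
  shows "ext_le A a x y"
proof -
  let ?m = "tmeet T (ext_le A a) x y"
  have m: "?m \<in> T" "ext_le A a ?m x" "ext_le A a ?m y" using tmeet_spec[OF x y] by auto
  have "tree.height x - tree.height ?m = 0"
    using tree.tree_op_spec[OF x, of y] xy height_zero by simp
  then have "?m = x" using tree.height_strict_mono[OF x m(1,2)] by fastforce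
  then show ?thesis using m(3) by simp
qed

lemma height_tree_op_less:
  assumes x: "x \<in> T" and g: "g \<in> T" and "x \<noteq> Some (zer A)" "g \<noteq> Some (zer A)"
  shows "tree.height (x \<ominus>\<^sub>T g) < tree.height x"
proof -
  have m: "tmeet T (ext_le A a) x g \<noteq> Some (zer A)" "tmeet T (ext_le A a) x g \<in> T"
    using tmeet_spec[OF x g] assms by auto
  then have "tree.height (tmeet T (ext_le A a) x g) \<noteq> 0"
    using tree.eq_if_le_height_0[OF m(2) zero_in_T zero_below[OF m(2)]] by blast
  moreover have "tree.height x \<noteq> 0"
    using tree.eq_if_le_height_0[OF x zero_in_T zero_below[OF x]] assms(3)
    by auto
  ultimately show ?thesis using tree.tree_op_spec[OF x, of g] by simp
qed

lemma weak_bck_E: "weak_bck E"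
  unfolding weak_bck_def is_subuniverse_def car_E opr_E zer_E
proof (intro conjI ballI impI subset_refl zero_in_T)
  fix x assume x: "x \<in> T"
  show "x \<ominus>\<^sub>T Some (zer A) = x" by (rule tree_op_zero[OF x])
  show "Some (zer A) \<ominus>\<^sub>T x = Some (zer A)" by (rule zero_tree_op)
  show "x \<ominus>\<^sub>T x = Some (zer A)" by (rule tree_op_self[OF x])
  fix y assume y: "y \<in> T"
  show "x \<ominus>\<^sub>T y \<in> T" by (rule tree_op_closed[OF x])
  assume "x \<ominus>\<^sub>T y = Some (zer A) \<and> y \<ominus>\<^sub>T x = Some (zer A)"
  then show "x = y"
    using tree.antisym[OF x y] below_if_tree_op_zero[OF x y] below_if_tree_op_zero[OF y x] by blast
qed

lemma finite_car_E: "finite (car E)"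
  unfolding car_E by (rule tree.finite_T)

lemma iterated_diff_vanishes_E: "iterated_diff_vanishes E (card T)"
  unfolding iterated_diff_vanishes_def car_E opr_E zer_E
proof (intro ballI impI)
  fix g x assume g: "g \<in> T" "g \<noteq> Some (zer A)" and x: "x \<in> T"
  show "((\<lambda>y. y \<ominus>\<^sub>T g) ^^ card T) x = Some (zer A)"
    by (rule funpow_reaches_fixpoint[where S = T and \<mu> = tree.height])
      (use g x zero_tree_op tree_op_closed height_tree_op_less tree.height_le_card in auto)
qed

lemma eval_E_Some:
  assumes "\<forall>i. w i \<in> Some ` B"
  shows "eval E w r = Some (eval A (\<lambda>i. the (w i)) r)"
proof (induction r)
  case (Var i)
  obtain b where "w i = Some b" using assms by blast
  then show ?case by simp
next
  case Zero
  show ?case by (simp add: zer_E)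
next
  case (Minus r r')
  have "\<forall>i. the (w i) \<in> B" using assms by (metis imageE option.sel)
  then have "eval A (\<lambda>i. the (w i)) r \<in> B" "eval A (\<lambda>i. the (w i)) r' \<in> B"
    using eval_in_subuniverse[OF subuniverse_B, of "\<lambda>i. the (w i)"] by simp_all
  then show ?case using Minus tree_op_Some by (simp add: opr_E)
qed

end


section \<open>Covers\<close>

locale cover = extension A B a for A :: "'a alg" and B a +
  fixes D :: "'a option set"
  assumes subuniverse_D: "is_subuniverse (ext_alg A B a) D" and None_in_D: "None \<in> D"
    and not_embeddable: "\<not> iso_to_sub (subalg (ext_alg A B a) D) A"
    and minimal: "\<forall>D'. is_subuniverse (ext_alg A B a) D' \<and> None \<in> D' \<and>
       \<not> iso_to_sub (subalg (ext_alg A B a) D') A \<longrightarrow> D \<subseteq> D'"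
begin

abbreviation C :: "'a option alg" where "C \<equiv> subalg E D"

lemma car_C: "car C = D" and zer_C: "zer C = Some (zer A)"
  unfolding subalg_def zer_E by simp_all

lemma weak_bck_C: "weak_bck C"
  by (rule weak_bck_subalg[OF weak_bck_E subuniverse_D])

lemma iterated_diff_vanishes_C: "iterated_diff_vanishes C (card T)"
  by (rule iterated_diff_vanishes_subalg[OF iterated_diff_vanishes_E subuniverse_D])

lemma finite_car_C: "finite (car C)"
  using subuniverse_D finite_car_E finite_subset unfolding car_C is_subuniverse_def by blast

lemma not_Ids_le_Ids_C: "\<not> Ids A \<subseteq> Ids C"
  using iso_to_sub_if_Ids_le[OF weak_bck finite_carrier iterated_diff_vanishes
      weak_bck_C finite_car_C iterated_diff_vanishes_C, of None]
    None_in_D not_embeddable unfolding car_C zer_C by blast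

text \<open>By minimality of \<open>D\<close>, \<open>C\<close> is generated by any assignment separating an identity of \<open>A\<close>: the
  subalgebra it generates contains \<open>c = None\<close> (otherwise it would lie in \<open>B\<close>, a subalgebra of
  \<open>A\<close>) and is not isomorphic to a subalgebra of \<open>A\<close>.\<close>

lemma car_C_subset_generated:
  assumes w: "w \<in> assignments C n" and st: "(s, t) \<in> Ids A" "eval C w s \<noteq> eval C w t"
  shows "car C \<subseteq> generated C w n"
proof -
  let ?G = "generated C w n"
  have w_C: "\<forall>i. w i \<in> car C" using assignment_in_car[OF weak_bck_closed[OF weak_bck_C] w] by blast
  have "is_subuniverse C ?G" by (rule subuniverse_generated[OF weak_bck_closed[OF weak_bck_C] w_C])
  then have G: "is_subuniverse E ?G" by (rule subuniverse_of_subalg[OF subuniverse_D])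
  have w_G: "w i \<in> ?G" for i by (rule assignment_in_generated[OF w])
  have "None \<in> ?G"
  proof (rule ccontr)
    assume None: "None \<notin> ?G"
    have "w i \<in> Some ` B" for i
    proof -
      have "w i \<in> T" using w_G G unfolding is_subuniverse_def car_E by blast
      moreover have "w i \<noteq> None" using w_G None by metis
      ultimately show ?thesis by simp
    qed
    then have "\<forall>i. the (w i) \<in> car A" using in_car_if_in_B by (metis imageE option.sel)
    then have "eval A (\<lambda>i. the (w i)) s = eval A (\<lambda>i. the (w i)) t"
      using st(1) unfolding Ids_def by simp
    then have "eval E w s = eval E w t" using eval_E_Some \<open>\<And>i. w i \<in> Some ` B\<close> by simp
    then show False using st(2) by (simp add: eval_subalg)
  qed
  moreover have "\<not> iso_to_sub (subalg E ?G) A"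
  proof
    assume "iso_to_sub (subalg E ?G) A"
    moreover have "closed (subalg E ?G)" using G unfolding is_subuniverse_def subalg_def by simp
    ultimately have "(s, t) \<in> Ids (subalg E ?G)" using Ids_le_if_iso_to_sub st(1) by blast
    then have "eval (subalg E ?G) w s = eval (subalg E ?G) w t"
      using w_G unfolding Ids_def by (simp add: subalg_def)
    then show False using st(2) by (simp add: eval_subalg)
  qed
  ultimately show ?thesis using minimal G unfolding car_C by blast
qed

lemma Ids_le_Ids_C_of_intermediate:
  fixes K :: "'b alg"
  assumes K: "is_cBCK K" and between: "Ids A \<inter> Ids C \<subseteq> Ids K"
    and st: "(s, t) \<in> Ids A" "(s, t) \<notin> Ids K"
  shows "Ids K \<subseteq> Ids C"
proof -
  have weak_K: "weak_bck K" by (rule cbck.weak_bck[OF cbck.intro[OF K]])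
  obtain v d where v: "\<forall>i. v i \<in> car K" and d: "d = Minus s t \<or> d = Minus t s"
    and d_nonzero: "eval K v d \<noteq> zer K"
    using exists_nonzero_difference[OF weak_K st(2)] by blast
  have "finite (vars s \<union> vars t)" using finite_vars by simp
  then obtain n where "\<forall>i\<in>vars s \<union> vars t. i < n" using finite_nat_set_iff_bounded by blast
  then have vars_d: "vars d \<subseteq> {..<n}" using d by auto
  have identities: "(minus_list d gs, Zero) \<in> Ids K" if "(minus_list d gs, Zero) \<in> Ids C" for gs
    using between minus_list_difference_in_Ids[OF weak_bck st(1) d] that by blast
  obtain w where w: "w \<in> assignments C n" "eval C w d \<noteq> zer C"
    and vanishing: "vanishing_terms K v n \<subseteq> vanishing_terms C w n"
    using exists_separating_assignment[OF weak_bck_C finite_car_C iterated_diff_vanishes_C weak_K v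
        vars_d d_nonzero identities] by blast
  have w_C: "\<forall>i. w i \<in> car C"
    using assignment_in_car[OF weak_bck_closed[OF weak_bck_C] w(1)] by blast
  have "eval C w s \<noteq> eval C w t"
    using d w(2) weak_bck_diff_self[OF weak_bck_C]
      eval_in_subuniverse[OF weak_bck_closed[OF weak_bck_C] w_C]
    by auto
  then have "car C \<subseteq> generated C w n" using car_C_subset_generated[OF w(1) st(1)] by blast
  then show ?thesis
    using Ids_le_if_generated_image[OF weak_bck_closed[OF weak_K] v]
      eval_eq_transfer[OF weak_bck_C w_C weak_K v vanishing] by blast
qed

end

theorem mainTheorem10:
  fixes A :: "'a alg" and C :: "'a option alg"
  assumes "is_cBCK A" and "finite (car A)" and "\<exists>x\<in>car A. x \<noteq> zer A"
    and "subdirectly_irreducible A"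
    and "in_Cov A C"
  shows "Ids A \<inter> Ids C \<subset> Ids A \<and>
         (\<forall>K :: 'b alg. is_cBCK K \<and> Ids A \<inter> Ids C \<subseteq> Ids K \<and> Ids K \<subseteq> Ids A
             \<longrightarrow> Ids K = Ids A \<or> Ids K = Ids A \<inter> Ids C)"
proof -
  obtain B a D where "is_subuniverse A B" "a \<in> B" "a \<noteq> zer A"
    and "is_subuniverse (ext_alg A B a) D" "None \<in> D" "\<not> iso_to_sub (subalg (ext_alg A B a) D) A"
    and "\<forall>D'. is_subuniverse (ext_alg A B a) D' \<and> None \<in> D' \<and>
           \<not> iso_to_sub (subalg (ext_alg A B a) D') A \<longrightarrow> D \<subseteq> D'"
    and C: "C = subalg (ext_alg A B a) D"
    using assms(5) unfolding in_Cov_def by blast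
  then interpret cover A B a D
    using assms(1,2,4) by unfold_locales blast+
  have "Ids A \<inter> Ids C \<subset> Ids A" using not_Ids_le_Ids_C C by blast
  moreover have "Ids K = Ids A \<or> Ids K = Ids A \<inter> Ids C"
    if K: "is_cBCK K" "Ids A \<inter> Ids C \<subseteq> Ids K" "Ids K \<subseteq> Ids A" for K :: "'b alg"
  proof (cases "Ids K = Ids A")
    case False
    then obtain s t where "(s, t) \<in> Ids A" "(s, t) \<notin> Ids K" using K(3) by auto
    then have "Ids K \<subseteq> Ids C" using Ids_le_Ids_C_of_intermediate K(1,2) C by blast
    then show ?thesis using K(2,3) by blast
  qed simp
  ultimately show ?thesis by blast
qed

end
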